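(* Fix $\delta>0$. The function $V^\delta$ restricted to $\mathcal G_\delta\times[\underline{\lambda},\infty)$ is the smallest supersolution of the discrete HJB equation $\mathcal T(W)-W=0$ satisfying the growth condition $W(x,\lambda)\le K+x$ (for some constant $K>0$); that is, $V^\delta$ satisfies $\mathcal T(V^\delta)\le V^\delta$ and this growth condition, and every nonnegative measurable $\overline W:\mathcal G_\delta\times[\underline{\lambda},\infty)\to[0,\infty)$ with $\mathcal T(\overline W)\le\overline W$ satisfying the growth condition fulfils $\overline W\ge V^\delta$ on $\mathcal G_\delta\times[\underline{\lambda},\infty)$.
   Context: Model: fix $p>0$, $q>0$, $d>0$, $\beta>0$, $\underline{\lambda}\ge0$ and distribution functions $F_U,F_Y$ of strictly positive random variables with finite expectation. For initial intensity $\lambda\ge\underline{\lambda}$, $\lambda_t=\underline{\lambda}+e^{-dt}(\lambda-\underline{\lambda})+\sum_{k=1}^{\widetilde N_t}Y_ke^{-d(t-T_k)}$ with $\widetilde N$ a rate-$\beta$ Poisson process (arrival times $T_k$) and $Y_k$ i.i.d. $\sim F_Y$ independent of $\widetilde N$; conditionally on $(\lambda_s)$, claims arrive as an inhomogeneous Poisson process $N_t$ with intensity $\lambda_t$, with i.i.d. sizes $U_j\sim F_U$ independent of everything else; surplus $X_t=x+pt-\sum_{j\le N_t}U_j$. The premium satisfies $p=(1+\eta)\mathbb E(U_1)\lambda_{\mathrm{av}}$, $\eta>0$, $\lambda_{\mathrm{av}}=\lim_t\mathbb E(\int_0^t\lambda_sds)/t$. Extended strategies: a pair $(L,\tau^F)$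 with $L$ a dividend process (non-decreasing, càdlàg, adapted, $L_t\le X_t$ before ruin) and $\tau^F$ a stopping time at which all current surplus is paid and the business is closed; value $J((L,\tau^F);x,\lambda)=\mathbb E\big(\int_{0^-}^{\tau^L\wedge\tau^F}e^{-qt}dL_t+1_{\{\tau^F<\tau^L\}}e^{-q\tau^F}(X_{\tau^F}-L_{\tau^F})\big)$, $\tau^L=\inf\{t:X_t-L_{t^-}<0\}$. Discretization: for $\delta>0$, $\mathcal G_\delta=\{x_n^\delta=np\delta:n\ge0\}$, $\rho^\delta(x)=\max\{x_n^\delta\le x\}$. At state $(x_n^\delta,\lambda)$ let $\tau,U$ be the time until and size of the next claim, $T,Y$ the time until and size of the next intensity jump, $\lambda^c_t=\underline{\lambda}+e^{-dt}(\lambda-\underline{\lambda})$. Control actions: $\mathbf E_0$: pay nothing until $\delta\wedge\tau\wedge T$; if $\delta<\tau\wedge T$ new state $(x_{n+1}^\delta,\lambda^c_\delta)$; if $\tau\le\delta\wedge T$ and $y=x_n^\delta+p\tau-U<0$, ruin; if $y\ge0$ pay $y-\rho^\delta(y)$ and new state $(\rho^\delta(y),\lambda^c_\tau)$; if $T<\delta\wedge\tau$ pay $pT$ and new state $(x_n^\delta,\lambda^c_T+Y)$. $\mathbf E_1$ (only if $n\ge1$): pay $p\delta$, new state $(x_{n-1}^\delta,\lambda)$. $\mathbf E_F$: pay $x_n^\delta$ and close. $\widetilde\Pi^\delta_{x_n^\delta,\lambda}$: extended strategies obtained by finite or infinite sequences of these actions; $V^\delta(x_n^\delta,\lambda)=\sup_{\pi\in\widetilde\Pi^\delta_{x_n^\delta,\lambda}}J(\pi;x_n^\delta,\lambda)$.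 Operators on nonnegative Lebesgue measurable $w:\mathcal G_\delta\times[\underline{\lambda},\infty)\to[0,\infty)$: with $y=x_n^\delta+p\tau-U$, $\mathcal T_0(w)(x_n^\delta,\lambda)=\mathbb P(\delta\wedge T\wedge\tau=\delta)e^{-q\delta}w(x_{n+1}^\delta,\lambda^c_\delta)+\mathbb E\big(1_{\{\delta\wedge T\wedge\tau=\tau,\ y\ge0\}}e^{-q\tau}[w(\rho^\delta(y),\lambda^c_\tau)+y-\rho^\delta(y)]\big)+\mathbb E\big(1_{\{\delta\wedge T\wedge\tau=T\}}e^{-qT}[w(x_n^\delta,\lambda^c_T+Y)+pT]\big)$; $\mathcal T_1(w)(x_n^\delta,\lambda)=w(x_{n-1}^\delta,\lambda)+\delta p$ (for $n\ge1$); $\mathcal T_F(w)(x_n^\delta,\lambda)=x_n^\delta$; $\mathcal T=\max\{\mathcal T_0,\mathcal T_1,\mathcal T_F\}$ (with $\mathcal T_1$ omitted when $n=0$). *)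

theory Defs
  imports "HOL-Probability.Probability"
begin

text \<open>Parameters are passed explicitly: premium rate p, discount rate q, decay d,
  jump rate beta of the intensity, lower bound lam0 of the intensity,
  claim-size law FU, intensity-jump law FY, step size delta.\<close>

definition grid :: "real \<Rightarrow> real \<Rightarrow> real set" where
  "grid p delta = {x. \<exists>n::nat. x = real n * p * delta}"

definition rho :: "real \<Rightarrow> real \<Rightarrow> real \<Rightarrow> real" where
  "rho p delta y = real (nat \<lfloor>y / (p * delta)\<rfloor>) * p * delta"

text \<open>Deterministic intensity decay between jumps and its integral.\<close>
definition lamc :: "real \<Rightarrow> real \<Rightarrow> real \<Rightarrow> real \<Rightarrow> real" where
  "lamc lam0 d l t = lam0 + exp (- d * t) * (l - lam0)"

definition Lam :: "real \<Rightarrow> real \<Rightarrow> real \<Rightarrow> real \<Rightarrow> real" where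
  "Lam lam0 d l t = integral {0..t} (\<lambda>s. lamc lam0 d l s)"

text \<open>Law of the time until the next claim when the intensity follows \<open>lamc\<close>
  (first point of an inhomogeneous Poisson process, constructed by time change
  of a standard exponential variable); value \<open>\<infinity>\<close> if there is no claim.\<close>
definition tau_law :: "real \<Rightarrow> real \<Rightarrow> real \<Rightarrow> ereal measure" where
  "tau_law lam0 d l = distr (density lborel (exponential_density 1)) borel
     (\<lambda>E. Inf (ereal ` {t. 0 \<le> t \<and> E \<le> Lam lam0 d l t}))"

text \<open>Law of the time until the next intensity jump.\<close>
definition T_law :: "real \<Rightarrow> real measure" where
  "T_law beta = density lborel (exponential_density beta)"

definition Omega :: "real \<Rightarrow> real \<Rightarrow> real \<Rightarrow> real measure \<Rightarrow> real measure \<Rightarrow> real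
    \<Rightarrow> ((ereal \<times> real) \<times> (real \<times> real)) measure" where
  "Omega lam0 d beta FU FY l = (tau_law lam0 d l \<Otimes>\<^sub>M FU) \<Otimes>\<^sub>M (T_law beta \<Otimes>\<^sub>M FY)"

text \<open>Long-run average intensity \<open>lim E(\<integral>_0^t lambda_s ds)/t\<close> in closed form.\<close>
definition lambda_av :: "real \<Rightarrow> real \<Rightarrow> real \<Rightarrow> real measure \<Rightarrow> real" where
  "lambda_av lam0 d beta FY = lam0 + beta * (\<integral>y. y \<partial>FY) / d"

definition T0 :: "real \<Rightarrow> real \<Rightarrow> real \<Rightarrow> real \<Rightarrow> real \<Rightarrow> real measure \<Rightarrow> real measure \<Rightarrow> real
    \<Rightarrow> (real \<Rightarrow> real \<Rightarrow> ennreal) \<Rightarrow> real \<Rightarrow> real \<Rightarrow> ennreal" where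
  "T0 p q d beta lam0 FU FY delta w x l =
     emeasure (Omega lam0 d beta FU FY l)
        {((\<tau>, U), (T, Y)) \<in> space (Omega lam0 d beta FU FY l).
           min (ereal delta) (min (ereal T) \<tau>) = ereal delta}
       * ennreal (exp (- q * delta)) * w (x + p * delta) (lamc lam0 d l delta)
   + (\<integral>\<^sup>+ ((\<tau>, U), (T, Y)).
        (let s = real_of_ereal \<tau>; y = x + p * s - U in
          of_bool (min (ereal delta) (min (ereal T) \<tau>) = \<tau> \<and> 0 \<le> y)
          * ennreal (exp (- q * s))
          * (w (rho p delta y) (lamc lam0 d l s) + ennreal (y - rho p delta y)))
      \<partial>Omega lam0 d beta FU FY l)
   + (\<integral>\<^sup>+ ((\<tau>, U), (T, Y)).
          of_bool (min (ereal delta) (min (ereal T) \<tau>) = ereal T)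
          * ennreal (exp (- q * T))
          * (w x (lamc lam0 d l T + Y) + ennreal (p * T))
      \<partial>Omega lam0 d beta FU FY l)"

definition T1 :: "real \<Rightarrow> real \<Rightarrow> (real \<Rightarrow> real \<Rightarrow> ennreal) \<Rightarrow> real \<Rightarrow> real \<Rightarrow> ennreal" where
  "T1 p delta w x l = w (x - p * delta) l + ennreal (delta * p)"

definition TF :: "real \<Rightarrow> real \<Rightarrow> ennreal" where
  "TF x l = ennreal x"

definition Top :: "real \<Rightarrow> real \<Rightarrow> real \<Rightarrow> real \<Rightarrow> real \<Rightarrow> real measure \<Rightarrow> real measure \<Rightarrow> real
    \<Rightarrow> (real \<Rightarrow> real \<Rightarrow> ennreal) \<Rightarrow> real \<Rightarrow> real \<Rightarrow> ennreal" where
  "Top p q d beta lam0 FU FY delta w x l =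
     (if p * delta \<le> x
      then max (max (T0 p q d beta lam0 FU FY delta w x l) (T1 p delta w x l)) (TF x l)
      else max (T0 p q d beta lam0 FU FY delta w x l) (TF x l))"

text \<open>A strategy chooses the next action as a
  function of the whole observed history, a list of states (surplus, intensity,
  current time) with the current state at the head.\<close>
datatype act = E0 | E1 | EF

type_synonym policy = "(real \<times> real \<times> real) list \<Rightarrow> act"

definition admissible :: "real \<Rightarrow> real \<Rightarrow> policy \<Rightarrow> bool" where
  "admissible p delta \<pi> \<longleftrightarrow> (\<forall>x l t h. \<pi> ((x, l, t) # h) = E1 \<longrightarrow> p * delta \<le> x)"

text \<open>Expected discounted payments of the first n actions of strategy \<pi>
  after history h.\<close>
primrec Jn :: "real \<Rightarrow> real \<Rightarrow> real \<Rightarrow> real \<Rightarrow> real \<Rightarrow> real measure \<Rightarrow> real measure \<Rightarrow> real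
    \<Rightarrow> policy \<Rightarrow> nat \<Rightarrow> (real \<times> real \<times> real) list \<Rightarrow> ennreal" where
  "Jn p q d beta lam0 FU FY delta \<pi> 0 h = 0"
| "Jn p q d beta lam0 FU FY delta \<pi> (Suc n) h =
    (case hd h of (x, l, t) \<Rightarrow>
      (case \<pi> h of
        EF \<Rightarrow> ennreal (exp (- q * t) * x)
      | E1 \<Rightarrow> ennreal (exp (- q * t) * (p * delta))
               + Jn p q d beta lam0 FU FY delta \<pi> n ((x - p * delta, l, t) # h)
      | E0 \<Rightarrow> (\<integral>\<^sup>+ ((\<tau>, U), (T, Y)).
           (if ereal delta < \<tau> \<and> delta < T then
              Jn p q d beta lam0 FU FY delta \<pi> n
                 ((x + p * delta, lamc lam0 d l delta, t + delta) # h)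
            else if \<tau> \<le> ereal delta \<and> \<tau> \<le> ereal T then
              (let s = real_of_ereal \<tau>; y = x + p * s - U in
                if y < 0 then 0
                else ennreal (exp (- q * (t + s)) * (y - rho p delta y))
                     + Jn p q d beta lam0 FU FY delta \<pi> n
                         ((rho p delta y, lamc lam0 d l s, t + s) # h))
            else if ereal T < \<tau> \<and> T < delta then
              ennreal (exp (- q * (t + T)) * (p * T))
              + Jn p q d beta lam0 FU FY delta \<pi> n
                  ((x, lamc lam0 d l T + Y, t + T) # h)
            else 0)
         \<partial>Omega lam0 d beta FU FY l)))"

definition J :: "real \<Rightarrow> real \<Rightarrow> real \<Rightarrow> real \<Rightarrow> real \<Rightarrow> real measure \<Rightarrow> real measure \<Rightarrow> real
    \<Rightarrow> policy \<Rightarrow> real \<Rightarrow> real \<Rightarrow> ennreal" where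
  "J p q d beta lam0 FU FY delta \<pi> x l =
     (SUP n. Jn p q d beta lam0 FU FY delta \<pi> n [(x, l, 0)])"

definition Vdelta :: "real \<Rightarrow> real \<Rightarrow> real \<Rightarrow> real \<Rightarrow> real \<Rightarrow> real measure \<Rightarrow> real measure \<Rightarrow> real
    \<Rightarrow> real \<Rightarrow> real \<Rightarrow> ennreal" where
  "Vdelta p q d beta lam0 FU FY delta x l =
     (SUP \<pi> \<in> {\<pi>. admissible p delta \<pi>}. J p q d beta lam0 FU FY delta \<pi> x l)"

end

theory Submission
  imports Defs
begin

text \<open>Let \<open>v n = T^n 0\<close> be the value iterates; they are measurable in the intensity and
  increase with \<open>n\<close>. Since almost surely no two of the times \<open>\<tau>\<close>, \<open>T\<close>, \<open>delta\<close> coincide,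
  \<open>exp (-q t) T0 v\<close> is exactly the expected value of one \<open>E0\<close> step started at time \<open>t\<close>
  followed by the payoff \<open>exp (-q t') v\<close>. Induction over the horizon then bounds the
  horizon-\<open>n\<close> payments of every admissible strategy by any chain \<open>w n\<close> with
  \<open>T (w n) \<le> w (n + 1)\<close>, in particular by \<open>v n\<close> and by every supersolution \<open>W\<close>, while the
  strategy that is greedy for \<open>T\<close> with respect to \<open>v (n - 1), ..., v 0\<close> attains \<open>v n\<close>.
  Hence \<open>V = (SUP n. v n) \<le> W\<close>, and monotone convergence gives
  \<open>T V \<le> (SUP n. T (v n)) = (SUP n. v (n + 1)) = V\<close>. The growth bound follows from the
  supersolution \<open>x + p/q\<close>, by \<open>exp (-q a) (x + p a + p/q) \<le> x + p/q\<close>.\<close>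

lemma measurable_restrict_atLeast_iff:
  "f \<in> borel_measurable (restrict_space borel {a..})
    \<longleftrightarrow> (\<lambda>l. f (max a l)) \<in> borel_measurable (borel :: real measure)"
proof
  assume "f \<in> borel_measurable (restrict_space borel {a..})"
  moreover have "(\<lambda>l. max a l) \<in> measurable borel (restrict_space borel {a..})"
    by (rule measurable_restrict_space2) auto
  ultimately show "(\<lambda>l. f (max a l)) \<in> borel_measurable borel"
    by (rule measurable_compose[rotated])
next
  assume "(\<lambda>l. f (max a l)) \<in> borel_measurable borel"
  then have "(\<lambda>l. f (max a l)) \<in> borel_measurable (restrict_space borel {a..})"
    by (rule measurable_restrict_space1)
  then show "f \<in> borel_measurable (restrict_space borel {a..})"
    by (rule measurable_cong[THEN iffD1, rotated]) (auto simp: space_restrict_space max_def)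
qed

lemma AE_pair_measure_conj:
  assumes "sigma_finite_measure M" "sigma_finite_measure N"
    and "Measurable.pred (M \<Otimes>\<^sub>M N) (\<lambda>z. P (fst z) \<and> Q (fst z) (snd z))"
    and "AE x in M. P x" and "\<And>x. P x \<Longrightarrow> AE y in N. Q x y"
  shows "AE z in M \<Otimes>\<^sub>M N. P (fst z) \<and> Q (fst z) (snd z)"
proof -
  interpret pair_sigma_finite M N
    using assms(1,2) by (simp add: pair_sigma_finite_def)
  show ?thesis
  proof (rule AE_pair_measure)
    show "{z \<in> space (M \<Otimes>\<^sub>M N). P (fst z) \<and> Q (fst z) (snd z)} \<in> sets (M \<Otimes>\<^sub>M N)"
      using assms(3) by measurable
    show "AE x in M. AE y in N. P (fst (x, y)) \<and> Q (fst (x, y)) (snd (x, y))"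
      using assms(4) by eventually_elim (simp add: assms(5))
  qed
qed

lemma ennreal_exp_mult: "ennreal (exp a * b) = ennreal (exp a) * ennreal b"
  by (rule ennreal_mult') simp

lemma ennreal_exp_add:
  "ennreal (exp (- q * (t + a))) = ennreal (exp (- q * t)) * ennreal (exp (- q * a))"
  by (simp add: ennreal_mult[symmetric] exp_add[symmetric] algebra_simps)

lemma ennreal_exp_add_distrib:
  "ennreal (exp (- q * t)) * (ennreal (exp (- q * a)) * (V + ennreal r))
    = ennreal (exp (- q * (t + a)) * r) + ennreal (exp (- q * (t + a))) * V"
proof -
  have "ennreal (exp (- q * (t + a)) * r) = ennreal (exp (- q * (t + a))) * ennreal r"
    by (rule ennreal_mult') simp
  then show ?thesis
    unfolding ennreal_exp_add by (simp add: algebra_simps)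
qed

lemma ennreal_SUP_add_const: "(SUP n. f n) + (c :: ennreal) = (SUP n. f n + c)"
  using ennreal_SUP_add_left[of UNIV f c] by simp

locale discrete_dividend_problem =
  fixes p q d beta lam0 delta :: real and FU FY :: "real measure"
  assumes p_pos: "p > 0" and q_pos: "q > 0" and d_pos: "d > 0" and beta_pos: "beta > 0"
    and lam0_nonneg: "lam0 \<ge> 0" and delta_pos: "delta > 0"
    and prob_FU: "prob_space FU" and sets_FU[measurable_cong]: "sets FU = sets borel"
    and FU_pos: "AE u in FU. u > 0"
    and prob_FY: "prob_space FY" and sets_FY[measurable_cong]: "sets FY = sets borel"
    and FY_pos: "AE y in FY. y > 0"
begin

section \<open>The time of the next claim\<close>

abbreviation "Om l \<equiv> Omega lam0 d beta FU FY l"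
abbreviation "Exp1 \<equiv> density lborel (exponential_density (1::real))"
abbreviation "claim_time l E \<equiv> Inf (ereal ` {t. 0 \<le> t \<and> E \<le> Lam lam0 d l t})"

lemma lamc_ge_lam0: "l \<ge> lam0 \<Longrightarrow> lamc lam0 d l t \<ge> lam0"
  unfolding lamc_def by simp

lemma Lam_eq:
  assumes "t \<ge> 0"
  shows "Lam lam0 d l t = lam0 * t + (l - lam0) * (1 - exp (- d * t)) / d"
proof -
  let ?F = "\<lambda>s. lam0 * s + (l - lam0) * (1 - exp (- d * s)) / d"
  have "(lamc lam0 d l has_integral (?F t - ?F 0)) {0..t}"
  proof (rule fundamental_theorem_of_calculus[OF assms])
    fix s assume "s \<in> {0..t}"
    show "(?F has_vector_derivative lamc lam0 d l s) (at s within {0..t})"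
      unfolding has_real_derivative_iff_has_vector_derivative[symmetric] lamc_def
      using d_pos by (auto intro!: derivative_eq_intros simp: field_simps)
  qed
  then show ?thesis unfolding Lam_def by (simp add: integral_unique)
qed

lemma Lam_mono:
  assumes "l \<ge> lam0" "0 \<le> s" "s \<le> t"
  shows "Lam lam0 d l s \<le> Lam lam0 d l t"
proof -
  have "exp (- d * t) \<le> exp (- d * s)"
    using assms d_pos by (simp add: mult_left_mono)
  then have "(l - lam0) * (1 - exp (- d * s)) \<le> (l - lam0) * (1 - exp (- d * t))"
    using assms by (intro mult_left_mono) auto
  moreover have "lam0 * s \<le> lam0 * t"
    using assms lam0_nonneg by (simp add: mult_left_mono)
  ultimately show ?thesis
    using assms d_pos by (simp add: Lam_eq divide_right_mono add_mono)
qed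

lemma isCont_Lam:
  assumes "t > 0"
  shows "isCont (Lam lam0 d l) t"
proof -
  let ?F = "\<lambda>s. lam0 * s + (l - lam0) * (1 - exp (- d * s)) / d"
  have "eventually (\<lambda>s. Lam lam0 d l s = ?F s) (nhds t)"
    using assms by (intro eventually_mono[OF eventually_nhds_in_open[of "{0<..}"]]) (auto simp: Lam_eq)
  moreover have "isCont ?F t"
    using d_pos by (intro continuous_intros) auto
  ultimately show ?thesis
    using isCont_cong[of "Lam lam0 d l" ?F t] by simp
qed

lemma claim_time_nonneg: "0 \<le> claim_time l E"
  by (rule Inf_greatest) auto

text \<open>The integrated intensity is continuous and non-decreasing, so it hits the level \<open>E\<close>
  exactly at a positive finite claim time.\<close>
lemma Lam_claim_time:
  assumes l: "l \<ge> lam0" and t: "t > 0" and claim: "claim_time l E = ereal t"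
  shows "E = Lam lam0 d l t"
proof (rule ccontr)
  have near: "\<exists>h>0. \<forall>s. \<bar>s - t\<bar> < h \<longrightarrow> \<bar>Lam lam0 d l s - Lam lam0 d l t\<bar> < e" if "e > 0" for e
    using isCont_Lam[OF t] that unfolding isCont_def LIM_eq by (metis abs_zero diff_self real_norm_def)
  assume "E \<noteq> Lam lam0 d l t"
  then consider "Lam lam0 d l t < E" | "E < Lam lam0 d l t" by linarith
  then show False
  proof cases
    case 1
    obtain h where h: "h > 0" "\<And>s. \<bar>s - t\<bar> < h \<Longrightarrow> \<bar>Lam lam0 d l s - Lam lam0 d l t\<bar> < E - Lam lam0 d l t"
      using near[of "E - Lam lam0 d l t"] 1 by auto
    have below: "Lam lam0 d l (t + h/2) < E"
      using h(2)[of "t + h/2"] h(1) by auto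
    have "ereal (t + h/2) \<le> claim_time l E"
    proof (rule Inf_greatest, clarify)
      fix s assume s: "0 \<le> s" "E \<le> Lam lam0 d l s"
      show "ereal (t + h/2) \<le> ereal s"
        using Lam_mono[OF l s(1), of "t + h/2"] below s by fastforce
    qed
    then show False using claim h(1) by simp
  next
    case 2
    obtain h where h: "h > 0" "\<And>s. \<bar>s - t\<bar> < h \<Longrightarrow> \<bar>Lam lam0 d l s - Lam lam0 d l t\<bar> < Lam lam0 d l t - E"
      using near[of "Lam lam0 d l t - E"] 2 by auto
    define s where "s = max (t/2) (t - h/2)"
    have s: "0 \<le> s" "s < t" "\<bar>s - t\<bar> < h"
      using t h(1) by (auto simp: s_def)
    have "E \<le> Lam lam0 d l s"
      using h(2)[OF s(3)] by auto
    then have "claim_time l E \<le> ereal s"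
      using s by (intro Inf_lower) auto
    then show False using claim s by simp
  qed
qed

lemma claim_time_eq_INF_rat:
  assumes l: "l \<ge> lam0"
  shows "claim_time l E = (INF r\<in>{r\<in>\<rat>. 0 \<le> r}. if E \<le> Lam lam0 d l r then ereal r else \<infinity>)"
    (is "_ = ?I")
proof (rule antisym)
  show "claim_time l E \<le> ?I"
    by (rule INF_greatest) (auto intro!: Inf_lower)
  show "?I \<le> claim_time l E"
  proof (rule Inf_greatest, clarify)
    fix t assume t: "0 \<le> t" "E \<le> Lam lam0 d l t"
    show "?I \<le> ereal t"
    proof (rule ereal_le_epsilon2)
      fix e :: real assume "e > 0"
      then obtain r where r: "r \<in> \<rat>" "t < r" "r < t + e"
        using Rats_dense_in_real[of t "t + e"] by auto
      have "E \<le> Lam lam0 d l r"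
        using Lam_mono[OF l t(1), of r] r t by auto
      then have "?I \<le> ereal r"
        using r t by (intro INF_lower2[of r]) auto
      also have "\<dots> \<le> ereal (t + e)"
        using r by simp
      finally show "?I \<le> ereal t + ereal e"
        by simp
    qed
  qed
qed

lemma claim_time_measurable:
  "(\<lambda>(l, E). claim_time (max lam0 l) E) \<in> borel_measurable (borel \<Otimes>\<^sub>M borel)"
proof -
  have eq: "(\<lambda>(l, E). claim_time (max lam0 l) E) = (\<lambda>z. INF r\<in>{r\<in>\<rat>. 0 \<le> r}.
      if snd z \<le> lam0 * r + (max lam0 (fst z) - lam0) * (1 - exp (- d * r)) / d then ereal r else \<infinity>)"
    by (auto simp: claim_time_eq_INF_rat Lam_eq intro!: INF_cong)
  have "countable {r\<in>\<rat>. (0::real) \<le> r}"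
    by (rule countable_subset[OF _ countable_rat]) auto
  then show ?thesis
    unfolding eq by (rule borel_measurable_INF) measurable
qed

lemma claim_time_measurable_Exp1:
  assumes "l \<ge> lam0"
  shows "claim_time l \<in> measurable Exp1 borel"
proof -
  have "(\<lambda>E. (\<lambda>(l, E). claim_time (max lam0 l) E) (l, E)) \<in> borel_measurable borel"
    by (rule measurable_compose[OF _ claim_time_measurable]) simp
  then have "claim_time l \<in> borel_measurable borel"
    using assms by (simp add: max_def)
  then show ?thesis
    by (simp cong: measurable_cong_sets)
qed

section \<open>The law of one step\<close>

lemma sets_tau_law[measurable_cong]: "sets (tau_law lam0 d l) = sets (borel :: ereal measure)"
  unfolding tau_law_def by simp

lemma sets_T_law[measurable_cong]: "sets (T_law beta) = sets (borel :: real measure)"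
  unfolding T_law_def by simp

lemma sets_Om: "sets (Om l) = sets ((borel \<Otimes>\<^sub>M borel) \<Otimes>\<^sub>M (borel \<Otimes>\<^sub>M borel))"
  unfolding Omega_def by (rule sets_pair_measure_cong sets_tau_law sets_T_law sets_FU sets_FY)+

lemma space_Om: "space (Om l) = UNIV"
  by (subst sets_eq_imp_space_eq[OF sets_Om[of l]]) (simp add: space_pair_measure)

lemma measurable_Om:
  "f \<in> measurable ((borel \<Otimes>\<^sub>M borel) \<Otimes>\<^sub>M (borel \<Otimes>\<^sub>M borel)) N \<Longrightarrow> f \<in> measurable (Om l) N"
  using measurable_cong_sets[OF sets_Om[of l] refl, of N] by blast

lemma prob_space_tau_law:
  assumes "l \<ge> lam0"
  shows "prob_space (tau_law lam0 d l)"
proof -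
  interpret prob_space Exp1
    by (rule prob_space_exponential_density) simp
  show ?thesis
    unfolding tau_law_def using claim_time_measurable_Exp1[OF assms] by (rule prob_space_distr)
qed

lemma prob_space_T_law: "prob_space (T_law beta)"
  unfolding T_law_def using beta_pos by (rule prob_space_exponential_density)

lemma prob_space_Om:
  assumes "l \<ge> lam0"
  shows "prob_space (Om l)"
  unfolding Omega_def
  by (intro prob_space_pair prob_space_tau_law[OF assms] prob_space_T_law prob_FU prob_FY)

lemma AE_tau_law:
  assumes l: "l \<ge> lam0"
  shows "AE \<tau> in tau_law lam0 d l. 0 \<le> \<tau> \<and> \<tau> \<noteq> ereal delta"
proof -
  have "AE E in Exp1. E \<noteq> Lam lam0 d l delta"
    using AE_lborel_singleton[of "Lam lam0 d l delta"] by (subst AE_density) (auto elim!: AE_mp)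
  then have "AE E in Exp1. 0 \<le> claim_time l E \<and> claim_time l E \<noteq> ereal delta"
    by (rule AE_mp) (auto simp: claim_time_nonneg dest: Lam_claim_time[OF l delta_pos])
  then show ?thesis
    unfolding tau_law_def by (subst AE_distr_iff[OF claim_time_measurable_Exp1[OF l]]) auto
qed

lemma AE_T_law: "AE T in T_law beta. 0 \<le> T \<and> T \<noteq> delta \<and> T \<noteq> c"
proof -
  have "AE T in lborel. T \<noteq> delta \<and> T \<noteq> c"
    using AE_lborel_singleton[of delta] AE_lborel_singleton[of c] by eventually_elim simp
  then show ?thesis
    unfolding T_law_def
    by (subst AE_density) (auto elim!: AE_mp simp: exponential_density_def split: if_splits)
qed

text \<open>On regular outcomes the three terms of \<open>T0\<close> are mutually exclusive.\<close>
definition regular_outcome :: "(ereal \<times> real) \<times> (real \<times> real) \<Rightarrow> bool" where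
  "regular_outcome = (\<lambda>((\<tau>, U), (T, Y)).
     0 \<le> \<tau> \<and> \<tau> \<noteq> ereal delta \<and> 0 < U \<and> 0 \<le> T \<and> T \<noteq> delta \<and> ereal T \<noteq> \<tau> \<and> 0 < Y)"

lemma AE_regular_outcome:
  assumes l: "l \<ge> lam0"
  shows "AE \<omega> in Om l. regular_outcome \<omega>"
proof -
  have sf: "sigma_finite_measure M" if "prob_space M" for M :: "'a measure"
    using that by (simp add: prob_space_imp_sigma_finite)
  have tau_U: "AE z in tau_law lam0 d l \<Otimes>\<^sub>M FU. (0 \<le> fst z \<and> fst z \<noteq> ereal delta) \<and> 0 < snd z"
    by (rule AE_pair_measure_conj[OF sf sf]) (use prob_space_tau_law[OF l] prob_FU AE_tau_law[OF l] FU_pos in auto)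
  have T_Y: "AE z in T_law beta \<Otimes>\<^sub>M FY. (0 \<le> fst z \<and> fst z \<noteq> delta \<and> ereal (fst z) \<noteq> \<tau>) \<and> 0 < snd z"
    for \<tau> :: ereal
  proof -
    have T: "AE T in T_law beta. 0 \<le> T \<and> T \<noteq> delta \<and> ereal T \<noteq> \<tau>"
      using AE_T_law[of "real_of_ereal \<tau>"] by eventually_elim (cases \<tau>, auto)
    show ?thesis
      by (rule AE_pair_measure_conj[OF sf[OF prob_space_T_law] sf[OF prob_FY] _ T]) (use FY_pos in auto)
  qed
  have "AE \<omega> in Om l. ((0 \<le> fst (fst \<omega>) \<and> fst (fst \<omega>) \<noteq> ereal delta) \<and> 0 < snd (fst \<omega>))
      \<and> ((0 \<le> fst (snd \<omega>) \<and> fst (snd \<omega>) \<noteq> delta \<and> ereal (fst (snd \<omega>)) \<noteq> fst (fst \<omega>)) \<and> 0 < snd (snd \<omega>))"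
    unfolding Omega_def
  proof (rule AE_pair_measure_conj[OF sf sf _ tau_U T_Y])
    show "prob_space (tau_law lam0 d l \<Otimes>\<^sub>M FU)" "prob_space (T_law beta \<Otimes>\<^sub>M FY)"
      by (intro prob_space_pair prob_space_tau_law[OF l] prob_space_T_law prob_FU prob_FY)+
    show "Measurable.pred ((tau_law lam0 d l \<Otimes>\<^sub>M FU) \<Otimes>\<^sub>M (T_law beta \<Otimes>\<^sub>M FY))
      (\<lambda>\<omega>. ((0 \<le> fst (fst \<omega>) \<and> fst (fst \<omega>) \<noteq> ereal delta) \<and> 0 < snd (fst \<omega>))
      \<and> ((0 \<le> fst (snd \<omega>) \<and> fst (snd \<omega>) \<noteq> delta \<and> ereal (fst (snd \<omega>)) \<noteq> fst (fst \<omega>)) \<and> 0 < snd (snd \<omega>)))"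
      using sets_Om[of l] unfolding Omega_def by measurable
  qed
  then show ?thesis
    by eventually_elim (auto simp: regular_outcome_def)
qed

section \<open>The operator \<open>T0\<close> as an integral\<close>

definition no_event_term :: "(real \<Rightarrow> real \<Rightarrow> ennreal) \<Rightarrow> real \<Rightarrow> real \<Rightarrow> (ereal \<times> real) \<times> (real \<times> real) \<Rightarrow> ennreal" where
  "no_event_term w x l = (\<lambda>((\<tau>, U), (T, Y)).
     of_bool (min (ereal delta) (min (ereal T) \<tau>) = ereal delta)
     * (ennreal (exp (- q * delta)) * w (x + p * delta) (lamc lam0 d l delta)))"

definition claim_term :: "(real \<Rightarrow> real \<Rightarrow> ennreal) \<Rightarrow> real \<Rightarrow> real \<Rightarrow> (ereal \<times> real) \<times> (real \<times> real) \<Rightarrow> ennreal" where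
  "claim_term w x l = (\<lambda>((\<tau>, U), (T, Y)).
     (let s = real_of_ereal \<tau>; y = x + p * s - U in
       of_bool (min (ereal delta) (min (ereal T) \<tau>) = \<tau> \<and> 0 \<le> y)
       * ennreal (exp (- q * s))
       * (w (rho p delta y) (lamc lam0 d l s) + ennreal (y - rho p delta y))))"

definition jump_term :: "(real \<Rightarrow> real \<Rightarrow> ennreal) \<Rightarrow> real \<Rightarrow> real \<Rightarrow> (ereal \<times> real) \<times> (real \<times> real) \<Rightarrow> ennreal" where
  "jump_term w x l = (\<lambda>((\<tau>, U), (T, Y)).
     of_bool (min (ereal delta) (min (ereal T) \<tau>) = ereal T)
     * ennreal (exp (- q * T))
     * (w x (lamc lam0 d l T + Y) + ennreal (p * T)))"

abbreviation "T0_integrand w x l \<omega> \<equiv> no_event_term w x l \<omega> + claim_term w x l \<omega> + jump_term w x l \<omega>"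

lemma rho_measurable[measurable]: "rho p delta \<in> borel_measurable borel"
  unfolding rho_def by measurable

lemma measurable_comp_rho:
  assumes w: "\<And>x. (\<lambda>l. w x l) \<in> borel_measurable borel"
    and g: "g \<in> borel_measurable M" and h: "h \<in> borel_measurable M"
  shows "(\<lambda>z. w (rho p delta (g z)) (h z)) \<in> borel_measurable M"
proof -
  have "(\<lambda>z. (\<lambda>i z. w (real i * p * delta) (h z)) (nat \<lfloor>g z / (p * delta)\<rfloor>) z) \<in> borel_measurable M"
  proof (rule measurable_compose_countable'[where f="\<lambda>i z. w (real i * p * delta) (h z)"
        and g="\<lambda>z. nat \<lfloor>g z / (p * delta)\<rfloor>" and I=UNIV])
    show "(\<lambda>z. w (real i * p * delta) (h z)) \<in> borel_measurable M" for i :: nat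
      using measurable_compose[OF h w] by simp
    show "(\<lambda>z. nat \<lfloor>g z / (p * delta)\<rfloor>) \<in> measurable M (count_space UNIV)"
      using g by measurable
  qed auto
  then show ?thesis
    unfolding rho_def .
qed

lemma T0_terms_measurable:
  assumes w: "\<And>x. (\<lambda>l. w x l) \<in> borel_measurable borel"
    and [measurable]: "L \<in> borel_measurable M" "ta \<in> borel_measurable M" "U \<in> borel_measurable M"
      "T \<in> borel_measurable M" "Y \<in> borel_measurable M"
  shows "(\<lambda>z. no_event_term w x (L z) ((ta z, U z), (T z, Y z))) \<in> borel_measurable M"
    and "(\<lambda>z. claim_term w x (L z) ((ta z, U z), (T z, Y z))) \<in> borel_measurable M"
    and "(\<lambda>z. jump_term w x (L z) ((ta z, U z), (T z, Y z))) \<in> borel_measurable M"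
proof -
  have [measurable]: "(\<lambda>l. w y l) \<in> borel_measurable borel" for y
    using w .
  show "(\<lambda>z. no_event_term w x (L z) ((ta z, U z), (T z, Y z))) \<in> borel_measurable M"
    unfolding no_event_term_def lamc_def of_bool_def by simp measurable
  have [measurable]: "(\<lambda>z. w (rho p delta (x + p * real_of_ereal (ta z) - U z))
      (lamc lam0 d (L z) (real_of_ereal (ta z)))) \<in> borel_measurable M"
    by (rule measurable_comp_rho[OF w]) (unfold lamc_def, measurable)
  have [measurable]: "(\<lambda>z. of_bool (min (ereal delta) (min (ereal (T z)) (ta z)) = ta z
      \<and> 0 \<le> x + p * real_of_ereal (ta z) - U z) :: ennreal) \<in> borel_measurable M"
    unfolding of_bool_def by measurable
  show "(\<lambda>z. claim_term w x (L z) ((ta z, U z), (T z, Y z))) \<in> borel_measurable M"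
    unfolding claim_term_def Let_def prod.case by measurable
  show "(\<lambda>z. jump_term w x (L z) ((ta z, U z), (T z, Y z))) \<in> borel_measurable M"
    unfolding jump_term_def lamc_def of_bool_def by simp measurable
qed

lemma T0_terms_measurable_Om:
  assumes w: "\<And>x. (\<lambda>l. w x l) \<in> borel_measurable borel"
  shows "no_event_term w x l \<in> borel_measurable (Om l)"
    and "claim_term w x l \<in> borel_measurable (Om l)"
    and "jump_term w x l \<in> borel_measurable (Om l)"
proof -
  let ?M = "(borel \<Otimes>\<^sub>M borel) \<Otimes>\<^sub>M (borel \<Otimes>\<^sub>M borel) :: ((ereal \<times> real) \<times> (real \<times> real)) measure"
  have "(\<lambda>z. l) \<in> borel_measurable ?M" "(\<lambda>z. fst (fst z)) \<in> borel_measurable ?M"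
    "(\<lambda>z. snd (fst z)) \<in> borel_measurable ?M" "(\<lambda>z. fst (snd z)) \<in> borel_measurable ?M"
    "(\<lambda>z. snd (snd z)) \<in> borel_measurable ?M"
    by measurable
  note terms = T0_terms_measurable[OF w this, where x=x]
  show "no_event_term w x l \<in> borel_measurable (Om l)"
    using terms(1) by (intro measurable_Om) simp
  show "claim_term w x l \<in> borel_measurable (Om l)"
    using terms(2) by (intro measurable_Om) simp
  show "jump_term w x l \<in> borel_measurable (Om l)"
    using terms(3) by (intro measurable_Om) simp
qed

lemma T0_eq_integral:
  assumes w: "\<And>x. (\<lambda>l. w x l) \<in> borel_measurable borel"
  shows "T0 p q d beta lam0 FU FY delta w x l = (\<integral>\<^sup>+ \<omega>. T0_integrand w x l \<omega> \<partial>Om l)"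
proof -
  note m = T0_terms_measurable_Om[OF w, where x=x and l=l]
  let ?S = "{((\<tau>, U), (T, Y)) \<in> space (Om l). min (ereal delta) (min (ereal T) \<tau>) = ereal delta}"
  have "?S = {\<omega> \<in> space (Om l). min (ereal delta) (min (ereal (fst (snd \<omega>))) (fst (fst \<omega>))) = ereal delta}"
    by auto
  also have "\<dots> \<in> sets (Om l)"
    using sets_Om[of l] by measurable
  finally have S: "?S \<in> sets (Om l)" .
  have "(\<integral>\<^sup>+ \<omega>. no_event_term w x l \<omega> \<partial>Om l)
      = (\<integral>\<^sup>+ \<omega>. (ennreal (exp (- q * delta)) * w (x + p * delta) (lamc lam0 d l delta)) * indicator ?S \<omega> \<partial>Om l)"
    by (intro nn_integral_cong) (auto simp: no_event_term_def space_Om indicator_def mult.commute)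
  also have "\<dots> = ennreal (exp (- q * delta)) * w (x + p * delta) (lamc lam0 d l delta) * emeasure (Om l) ?S"
    by (rule nn_integral_cmult_indicator[OF S])
  finally have "(\<integral>\<^sup>+ \<omega>. no_event_term w x l \<omega> \<partial>Om l)
      = emeasure (Om l) ?S * ennreal (exp (- q * delta)) * w (x + p * delta) (lamc lam0 d l delta)"
    by (simp add: mult_ac)
  then show ?thesis
    using m by (simp add: nn_integral_add T0_def claim_term_def jump_term_def)
qed

lemma grid_nonneg: "x \<in> grid p delta \<Longrightarrow> 0 \<le> x"
  using p_pos delta_pos by (auto simp: grid_def)

lemma grid_add:
  assumes "x \<in> grid p delta"
  shows "x + p * delta \<in> grid p delta"
proof -
  obtain n :: nat where "x = real n * p * delta"
    using assms by (auto simp: grid_def)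
  then have "x + p * delta = real (Suc n) * p * delta"
    by (simp add: algebra_simps)
  then show ?thesis
    unfolding grid_def by blast
qed

lemma grid_diff:
  assumes "x \<in> grid p delta" "p * delta \<le> x"
  shows "x - p * delta \<in> grid p delta"
proof -
  obtain n :: nat where n: "x = real n * p * delta"
    using assms(1) by (auto simp: grid_def)
  with assms(2) mult_pos_pos[OF p_pos delta_pos] have "n \<ge> 1"
    by (cases n) auto
  then have "x - p * delta = real (n - 1) * p * delta"
    using n by (simp add: of_nat_diff algebra_simps)
  then show ?thesis
    unfolding grid_def by blast
qed

lemma rho_in_grid: "rho p delta y \<in> grid p delta"
  unfolding grid_def rho_def by blast

lemma rho_nonneg: "0 \<le> rho p delta y"
  unfolding rho_def using p_pos delta_pos by simp

lemma rho_le: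
  assumes "0 \<le> y"
  shows "rho p delta y \<le> y"
proof -
  have pd: "p * delta > 0"
    using p_pos delta_pos by simp
  have "real (nat \<lfloor>y / (p * delta)\<rfloor>) \<le> y / (p * delta)"
    using assms pd by simp
  then show ?thesis
    unfolding rho_def using pd by (simp add: pos_le_divide_eq mult.assoc)
qed

text \<open>\<open>T0 w x l\<close> only reads \<open>w\<close> on the grid and at intensities \<open>\<ge> lam0\<close>; the extension
  by \<open>0\<close> off the grid and constantly below \<open>lam0\<close> turns measurability on
  \<open>[lam0, \<infinity>)\<close> into Borel measurability on all of \<open>\<real>\<close>.\<close>
definition grid_extension :: "(real \<Rightarrow> real \<Rightarrow> ennreal) \<Rightarrow> real \<Rightarrow> real \<Rightarrow> ennreal" where
  "grid_extension w x l = (if x \<in> grid p delta then w x (max lam0 l) else 0)"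

lemma grid_extension_eq: "x \<in> grid p delta \<Longrightarrow> lam0 \<le> l \<Longrightarrow> grid_extension w x l = w x l"
  unfolding grid_extension_def by (simp add: max_def)

lemma grid_extension_measurable:
  assumes "\<And>x. x \<in> grid p delta \<Longrightarrow> (\<lambda>l. w x l) \<in> borel_measurable (restrict_space borel {lam0..})"
  shows "(\<lambda>l. grid_extension w x l) \<in> borel_measurable borel"
proof (cases "x \<in> grid p delta")
  case True
  then show ?thesis
    using assms[OF True, unfolded measurable_restrict_atLeast_iff] by (simp add: grid_extension_def)
qed (simp add: grid_extension_def)

lemma T0_grid_extension:
  assumes x: "x \<in> grid p delta" and l: "lam0 \<le> l"
  shows "T0 p q d beta lam0 FU FY delta (grid_extension w) x l = T0 p q d beta lam0 FU FY delta w x l"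
proof -
  have ext: "grid_extension w x (lamc lam0 d l T + Y) = w x (lamc lam0 d l T + Y)" if "0 < Y" for T Y
    using x lamc_ge_lam0[OF l, of T] that by (intro grid_extension_eq) auto
  have jump: "(\<integral>\<^sup>+ ((\<tau>, U), (T, Y)). of_bool (min (ereal delta) (min (ereal T) \<tau>) = ereal T)
        * ennreal (exp (- q * T)) * (grid_extension w x (lamc lam0 d l T + Y) + ennreal (p * T)) \<partial>Om l)
    = (\<integral>\<^sup>+ ((\<tau>, U), (T, Y)). of_bool (min (ereal delta) (min (ereal T) \<tau>) = ereal T)
        * ennreal (exp (- q * T)) * (w x (lamc lam0 d l T + Y) + ennreal (p * T)) \<partial>Om l)"
    by (rule nn_integral_cong_AE, rule AE_mp[OF AE_regular_outcome[OF l]], rule AE_I2)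
      (auto simp: regular_outcome_def ext split: prod.splits)
  show ?thesis
    unfolding T0_def jump using x l
    by (simp add: grid_extension_eq grid_add rho_in_grid lamc_ge_lam0)
qed

lemma T0_eq_integral_grid:
  assumes w: "\<And>x. x \<in> grid p delta \<Longrightarrow> (\<lambda>l. w x l) \<in> borel_measurable (restrict_space borel {lam0..})"
    and x: "x \<in> grid p delta" and l: "lam0 \<le> l"
  shows "T0 p q d beta lam0 FU FY delta w x l = (\<integral>\<^sup>+ \<omega>. T0_integrand (grid_extension w) x l \<omega> \<partial>Om l)"
  using T0_grid_extension[OF x l, of w] T0_eq_integral[OF grid_extension_measurable[OF w]] by simp

abbreviation "Om0 \<equiv> (Exp1 \<Otimes>\<^sub>M FU) \<Otimes>\<^sub>M (T_law beta \<Otimes>\<^sub>M FY)"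

text \<open>Realising all the laws \<open>Om l\<close> on the one space \<open>Om0\<close> makes the dependence of \<open>T0\<close>
  on the intensity measurable.\<close>
lemma Om_eq_distr_Om0:
  assumes l: "lam0 \<le> l"
  shows "Om l = distr Om0 ((borel \<Otimes>\<^sub>M FU) \<Otimes>\<^sub>M (T_law beta \<Otimes>\<^sub>M FY))
                 (\<lambda>\<omega>. ((claim_time l (fst (fst \<omega>)), snd (fst \<omega>)), snd \<omega>))"
proof -
  note m = claim_time_measurable_Exp1[OF l]
  have sf: "sigma_finite_measure (distr FU FU (\<lambda>x. x))" "sigma_finite_measure (distr (T_law beta \<Otimes>\<^sub>M FY) (T_law beta \<Otimes>\<^sub>M FY) (\<lambda>x. x))"
    using prob_FU prob_space_T_law prob_FY by (simp_all add: prob_space_imp_sigma_finite prob_space_pair)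
  have "tau_law lam0 d l \<Otimes>\<^sub>M FU = distr (Exp1 \<Otimes>\<^sub>M FU) (borel \<Otimes>\<^sub>M FU) (\<lambda>(x, y). (claim_time l x, y))"
    using pair_measure_distr[OF m measurable_ident_sets[OF refl, of FU] sf(1)] unfolding tau_law_def by simp
  moreover have "(\<lambda>(x, y). (claim_time l x, y)) \<in> measurable (Exp1 \<Otimes>\<^sub>M FU) (borel \<Otimes>\<^sub>M FU)"
    using m by measurable
  ultimately have "Om l = distr Om0 ((borel \<Otimes>\<^sub>M FU) \<Otimes>\<^sub>M (T_law beta \<Otimes>\<^sub>M FY))
      (\<lambda>(x, y). ((\<lambda>(x, y). (claim_time l x, y)) x, y))"
    using pair_measure_distr[OF _ measurable_ident_sets[OF refl] sf(2)] unfolding Omega_def by simp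
  also have "(\<lambda>(x, y). ((\<lambda>(x, y). (claim_time l x, y)) x, y))
      = (\<lambda>\<omega>. ((claim_time l (fst (fst \<omega>)), snd (fst \<omega>)), snd \<omega>))"
    by auto
  finally show ?thesis .
qed

lemma T0_measurable:
  assumes w: "\<And>x. (\<lambda>l. w x l) \<in> borel_measurable borel"
  shows "(\<lambda>l. T0 p q d beta lam0 FU FY delta w x (max lam0 l)) \<in> borel_measurable borel"
proof -
  let ?M = "borel \<Otimes>\<^sub>M Om0 :: (real \<times> (real \<times> real) \<times> (real \<times> real)) measure"
  let ?\<phi> = "\<lambda>l \<omega>. ((claim_time (max lam0 l) (fst (fst \<omega>)), snd (fst \<omega>)), snd \<omega>)"
  have mt: "(\<lambda>z. claim_time (max lam0 (fst z)) (fst (fst (snd z)))) \<in> borel_measurable ?M"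
    using measurable_compose[OF _ claim_time_measurable, of "\<lambda>z. (fst z, fst (fst (snd z)))" ?M] by simp
  have ml: "(\<lambda>z. max lam0 (fst z)) \<in> borel_measurable ?M" and mU: "(\<lambda>z. snd (fst (snd z))) \<in> borel_measurable ?M"
    and mT: "(\<lambda>z. fst (snd (snd z))) \<in> borel_measurable ?M" and mY: "(\<lambda>z. snd (snd (snd z))) \<in> borel_measurable ?M"
    by measurable
  have "(\<lambda>z. T0_integrand w x (max lam0 (fst z)) (?\<phi> (fst z) (snd z))) \<in> borel_measurable ?M"
    using T0_terms_measurable[where w=w, OF w ml mt mU mT mY, where x=x] by (simp add: borel_measurable_add)
  then have joint: "case_prod (\<lambda>l \<omega>. T0_integrand w x (max lam0 l) (?\<phi> l \<omega>)) \<in> borel_measurable ?M"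
    by (simp add: case_prod_beta')
  have eq: "T0 p q d beta lam0 FU FY delta w x (max lam0 l) = (\<integral>\<^sup>+ \<omega>. T0_integrand w x (max lam0 l) (?\<phi> l \<omega>) \<partial>Om0)"
    for l
  proof -
    have l: "lam0 \<le> max lam0 l"
      by simp
    have "?\<phi> l \<in> measurable Om0 ((borel \<Otimes>\<^sub>M FU) \<Otimes>\<^sub>M (T_law beta \<Otimes>\<^sub>M FY))"
      using claim_time_measurable_Exp1[OF l] by measurable
    moreover have "T0_integrand w x (max lam0 l) \<in> borel_measurable (Om (max lam0 l))"
      using T0_terms_measurable_Om[OF w] by measurable
    ultimately show ?thesis
      unfolding T0_eq_integral[OF w] Om_eq_distr_Om0[OF l] by (intro nn_integral_distr) auto
  qed
  interpret sigma_finite_measure Om0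
    by (intro prob_space_imp_sigma_finite prob_space_pair prob_space_exponential_density
        prob_FU prob_space_T_law prob_FY) simp
  show ?thesis
    unfolding eq by (rule borel_measurable_nn_integral[OF joint])
qed

lemma T0_terms_mono:
  assumes "\<And>x l. w x l \<le> w' x l"
  shows "no_event_term w x l \<omega> \<le> no_event_term w' x l \<omega>"
    and "claim_term w x l \<omega> \<le> claim_term w' x l \<omega>"
    and "jump_term w x l \<omega> \<le> jump_term w' x l \<omega>"
  using assms
  by (cases \<omega>; auto simp: no_event_term_def claim_term_def jump_term_def Let_def
      intro!: mult_left_mono add_right_mono)+

lemma T0_mono:
  "(\<And>x l. w x l \<le> w' x l) \<Longrightarrow> T0 p q d beta lam0 FU FY delta w x l \<le> T0 p q d beta lam0 FU FY delta w' x l"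
  unfolding T0_def
  by (intro add_mono mult_left_mono nn_integral_mono)
     (auto split: prod.splits intro!: mult_left_mono add_mono simp: Let_def)

lemma Top_mono:
  assumes "\<And>x l. w x l \<le> w' x l"
  shows "Top p q d beta lam0 FU FY delta w x l \<le> Top p q d beta lam0 FU FY delta w' x l"
proof -
  have "T0 p q d beta lam0 FU FY delta w x l \<le> T0 p q d beta lam0 FU FY delta w' x l"
    using assms by (rule T0_mono)
  moreover have "T1 p delta w x l \<le> T1 p delta w' x l"
    unfolding T1_def using assms by (intro add_right_mono)
  ultimately show ?thesis
    unfolding Top_def by (auto simp: le_max_iff_disj)
qed

lemma T0_le_Top: "T0 p q d beta lam0 FU FY delta w x l \<le> Top p q d beta lam0 FU FY delta w x l"
  unfolding Top_def by (auto simp: le_max_iff_disj)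

lemma T1_le_Top: "p * delta \<le> x \<Longrightarrow> T1 p delta w x l \<le> Top p q d beta lam0 FU FY delta w x l"
  unfolding Top_def by (auto simp: le_max_iff_disj)

lemma TF_le_Top: "TF x l \<le> Top p q d beta lam0 FU FY delta w x l"
  unfolding Top_def by (auto simp: le_max_iff_disj)

lemma T0_terms_SUP:
  "no_event_term (\<lambda>x l. SUP n. w n x l) x l \<omega> = (SUP n. no_event_term (w n) x l \<omega>)"
  "claim_term (\<lambda>x l. SUP n. w n x l) x l \<omega> = (SUP n. claim_term (w n) x l \<omega>)"
  "jump_term (\<lambda>x l. SUP n. w n x l) x l \<omega> = (SUP n. jump_term (w n) x l \<omega>)"
proof -
  obtain \<tau> U T Y where \<omega>: "\<omega> = ((\<tau>, U), (T, Y))"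
    by (metis prod.collapse)
  show "no_event_term (\<lambda>x l. SUP n. w n x l) x l \<omega> = (SUP n. no_event_term (w n) x l \<omega>)"
    unfolding no_event_term_def \<omega> prod.case SUP_mult_left_ennreal ..
  show "claim_term (\<lambda>x l. SUP n. w n x l) x l \<omega> = (SUP n. claim_term (w n) x l \<omega>)"
    unfolding claim_term_def \<omega> prod.case Let_def ennreal_SUP_add_const SUP_mult_left_ennreal ..
  show "jump_term (\<lambda>x l. SUP n. w n x l) x l \<omega> = (SUP n. jump_term (w n) x l \<omega>)"
    unfolding jump_term_def \<omega> prod.case ennreal_SUP_add_const SUP_mult_left_ennreal ..
qed

lemma T0_SUP:
  assumes w: "\<And>n x. (\<lambda>l. w n x l) \<in> borel_measurable borel"
    and inc: "\<And>n x l. w n x l \<le> w (Suc n) x l"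
  shows "T0 p q d beta lam0 FU FY delta (\<lambda>x l. SUP n. w n x l) x l = (SUP n. T0 p q d beta lam0 FU FY delta (w n) x l)"
proof -
  have inc_terms: "incseq (\<lambda>n. no_event_term (w n) x l \<omega>)" "incseq (\<lambda>n. claim_term (w n) x l \<omega>)"
    "incseq (\<lambda>n. jump_term (w n) x l \<omega>)"
    "incseq (\<lambda>n. no_event_term (w n) x l \<omega> + claim_term (w n) x l \<omega>)" for \<omega>
    by (intro incseq_SucI add_mono T0_terms_mono inc)+
  have pointwise: "T0_integrand (\<lambda>x l. SUP n. w n x l) x l \<omega> = (SUP n. T0_integrand (w n) x l \<omega>)" for \<omega>
  proof -
    have "(SUP n. T0_integrand (w n) x l \<omega>)
        = (SUP n. no_event_term (w n) x l \<omega> + claim_term (w n) x l \<omega>) + (SUP n. jump_term (w n) x l \<omega>)"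
      using inc_terms by (intro ennreal_SUP_add)
    also have "(SUP n. no_event_term (w n) x l \<omega> + claim_term (w n) x l \<omega>)
        = (SUP n. no_event_term (w n) x l \<omega>) + (SUP n. claim_term (w n) x l \<omega>)"
      using inc_terms by (intro ennreal_SUP_add)
    finally show ?thesis
      by (simp add: T0_terms_SUP)
  qed
  have "T0 p q d beta lam0 FU FY delta (\<lambda>x l. SUP n. w n x l) x l = (\<integral>\<^sup>+ \<omega>. (SUP n. T0_integrand (w n) x l \<omega>) \<partial>Om l)"
    using w unfolding pointwise[symmetric] by (intro T0_eq_integral) measurable
  also have "\<dots> = (SUP n. \<integral>\<^sup>+ \<omega>. T0_integrand (w n) x l \<omega> \<partial>Om l)"
  proof (rule nn_integral_monotone_convergence_SUP)
    show "incseq (\<lambda>n \<omega>. T0_integrand (w n) x l \<omega>)"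
      by (intro incseq_SucI le_funI add_mono T0_terms_mono inc)
    show "T0_integrand (w n) x l \<in> borel_measurable (Om l)" for n
      using T0_terms_measurable_Om[OF w] by measurable
  qed
  also have "\<dots> = (SUP n. T0 p q d beta lam0 FU FY delta (w n) x l)"
    using T0_eq_integral[OF w] by simp
  finally show ?thesis .
qed

section \<open>Strategies and value iteration\<close>

definition E0_integrand :: "(real \<Rightarrow> real \<Rightarrow> real \<Rightarrow> ennreal) \<Rightarrow> real \<Rightarrow> real \<Rightarrow> real
    \<Rightarrow> (ereal \<times> real) \<times> (real \<times> real) \<Rightarrow> ennreal" where
  "E0_integrand g x l t = (\<lambda>((\<tau>, U), (T, Y)).
     (if ereal delta < \<tau> \<and> delta < T then g (x + p * delta) (lamc lam0 d l delta) (t + delta)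
      else if \<tau> \<le> ereal delta \<and> \<tau> \<le> ereal T then
        (let s = real_of_ereal \<tau>; y = x + p * s - U in
          if y < 0 then 0
          else ennreal (exp (- q * (t + s)) * (y - rho p delta y)) + g (rho p delta y) (lamc lam0 d l s) (t + s))
      else if ereal T < \<tau> \<and> T < delta then
        ennreal (exp (- q * (t + T)) * (p * T)) + g x (lamc lam0 d l T + Y) (t + T)
      else 0))"

lemma Jn_E0:
  "\<pi> ((x, l, t) # h) = E0 \<Longrightarrow> Jn p q d beta lam0 FU FY delta \<pi> (Suc n) ((x, l, t) # h)
    = (\<integral>\<^sup>+ \<omega>. E0_integrand (\<lambda>x' l' t'. Jn p q d beta lam0 FU FY delta \<pi> n ((x', l', t') # (x, l, t) # h)) x l t \<omega> \<partial>Om l)"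
  by (simp add: E0_integrand_def)

lemma E0_integrand_mono:
  assumes g: "\<And>x' l' t'. x' \<in> grid p delta \<Longrightarrow> lam0 \<le> l' \<Longrightarrow> g x' l' t' \<le> g' x' l' t'"
    and x: "x \<in> grid p delta" and l: "lam0 \<le> l" and Y: "0 \<le> snd (snd \<omega>)"
  shows "E0_integrand g x l t \<omega> \<le> E0_integrand g' x l t \<omega>"
proof -
  obtain \<tau> U T Y where \<omega>: "\<omega> = ((\<tau>, U), (T, Y))"
    by (metis prod.collapse)
  have "lam0 \<le> lamc lam0 d l T + Y"
    using lamc_ge_lam0[OF l, of T] Y \<omega> by simp
  then show ?thesis
    unfolding E0_integrand_def \<omega> using x l
    by (auto simp: Let_def grid_add rho_in_grid lamc_ge_lam0 intro!: g add_left_mono)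
qed

lemma T0_integrand_discounted_no_event:
  assumes x: "x \<in> grid p delta" and l: "lam0 \<le> l" and "ereal delta < \<tau>" "delta < T"
  shows "ennreal (exp (- q * t)) * T0_integrand (grid_extension v) x l ((\<tau>, U), (T, Y))
    = E0_integrand (\<lambda>x' l' t'. ennreal (exp (- q * t')) * v x' l') x l t ((\<tau>, U), (T, Y))"
proof -
  have "min (ereal delta) (min (ereal T) \<tau>) = ereal delta" "\<tau> \<noteq> ereal delta" "T \<noteq> delta"
    using assms(3,4) by (auto simp: min_def)
  then have "T0_integrand (grid_extension v) x l ((\<tau>, U), (T, Y))
      = ennreal (exp (- q * delta)) * v (x + p * delta) (lamc lam0 d l delta)"
    using x l by (simp add: no_event_term_def claim_term_def jump_term_def grid_extension_eq grid_add lamc_ge_lam0)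
  moreover have "E0_integrand (\<lambda>x' l' t'. ennreal (exp (- q * t')) * v x' l') x l t ((\<tau>, U), (T, Y))
      = ennreal (exp (- q * (t + delta))) * v (x + p * delta) (lamc lam0 d l delta)"
    using assms(3,4) by (simp add: E0_integrand_def)
  ultimately show ?thesis
    unfolding ennreal_exp_add by (simp only: mult.assoc)
qed

lemma T0_integrand_discounted_claim:
  assumes l: "lam0 \<le> l" and "s < delta" "s < T"
  shows "ennreal (exp (- q * t)) * T0_integrand (grid_extension v) x l ((ereal s, U), (T, Y))
    = E0_integrand (\<lambda>x' l' t'. ennreal (exp (- q * t')) * v x' l') x l t ((ereal s, U), (T, Y))"
proof -
  have min_eq: "min (ereal delta) (min (ereal T) (ereal s)) = ereal s"
    using assms by (auto simp: min_def)
  define y where "y = x + p * s - U"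
  show ?thesis
  proof (cases "y < 0")
    case True
    then have "x + p * s < U"
      by (simp add: y_def)
    then show ?thesis
      using assms min_eq by (simp add: no_event_term_def claim_term_def jump_term_def E0_integrand_def)
  next
    case False
    then have U_le: "U \<le> x + p * s"
      by (simp add: y_def)
    have "T0_integrand (grid_extension v) x l ((ereal s, U), (T, Y))
        = ennreal (exp (- q * s)) * (v (rho p delta y) (lamc lam0 d l s) + ennreal (y - rho p delta y))"
      using assms min_eq U_le
      by (simp add: y_def[symmetric] no_event_term_def claim_term_def jump_term_def Let_def
          grid_extension_eq rho_in_grid lamc_ge_lam0)
    moreover have "E0_integrand (\<lambda>x' l' t'. ennreal (exp (- q * t')) * v x' l') x l t ((ereal s, U), (T, Y))
        = ennreal (exp (- q * (t + s)) * (y - rho p delta y))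
          + ennreal (exp (- q * (t + s))) * v (rho p delta y) (lamc lam0 d l s)"
      using assms U_le by (simp add: y_def[symmetric] E0_integrand_def Let_def)
    ultimately show ?thesis
      by (simp only: ennreal_exp_add_distrib)
  qed
qed

lemma T0_integrand_discounted_jump:
  assumes x: "x \<in> grid p delta" and l: "lam0 \<le> l" and "ereal T < \<tau>" "T < delta" "0 < Y"
  shows "ennreal (exp (- q * t)) * T0_integrand (grid_extension v) x l ((\<tau>, U), (T, Y))
    = E0_integrand (\<lambda>x' l' t'. ennreal (exp (- q * t')) * v x' l') x l t ((\<tau>, U), (T, Y))"
proof -
  have "min (ereal delta) (min (ereal T) \<tau>) = ereal T" "\<not> \<tau> \<le> ereal T" "ereal T \<noteq> \<tau>" "\<not> delta < T"
    using assms(3,4) by (auto simp: min_def)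
  moreover have "grid_extension v x (lamc lam0 d l T + Y) = v x (lamc lam0 d l T + Y)"
    using x lamc_ge_lam0[OF l, of T] assms(5) by (intro grid_extension_eq) auto
  ultimately have "T0_integrand (grid_extension v) x l ((\<tau>, U), (T, Y))
      = ennreal (exp (- q * T)) * (v x (lamc lam0 d l T + Y) + ennreal (p * T))"
    and "E0_integrand (\<lambda>x' l' t'. ennreal (exp (- q * t')) * v x' l') x l t ((\<tau>, U), (T, Y))
      = ennreal (exp (- q * (t + T)) * (p * T)) + ennreal (exp (- q * (t + T))) * v x (lamc lam0 d l T + Y)"
    using assms(3,4) by (simp_all add: no_event_term_def claim_term_def jump_term_def E0_integrand_def)
  then show ?thesis
    by (simp only: ennreal_exp_add_distrib)
qed

lemma T0_integrand_discounted:
  assumes x: "x \<in> grid p delta" and l: "lam0 \<le> l" and \<omega>: "regular_outcome \<omega>"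
  shows "ennreal (exp (- q * t)) * T0_integrand (grid_extension v) x l \<omega>
    = E0_integrand (\<lambda>x' l' t'. ennreal (exp (- q * t')) * v x' l') x l t \<omega>"
proof -
  obtain \<tau> U T Y where \<omega>_eq: "\<omega> = ((\<tau>, U), (T, Y))"
    by (metis prod.collapse)
  have reg: "0 \<le> \<tau>" "\<tau> \<noteq> ereal delta" "T \<noteq> delta" "ereal T \<noteq> \<tau>" "0 < Y"
    using \<omega> by (auto simp: regular_outcome_def \<omega>_eq)
  then consider "ereal delta < \<tau>" "delta < T" | s where "\<tau> = ereal s" "s < delta" "s < T"
    | "ereal T < \<tau>" "T < delta"
    by (cases \<tau>) force+
  then show ?thesis
  proof cases
    case 1
    from x l 1 show ?thesis
      unfolding \<omega>_eq by (rule T0_integrand_discounted_no_event)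
  next
    case (2 s)
    from l 2(2,3) show ?thesis
      unfolding \<omega>_eq \<open>\<tau> = ereal s\<close> by (rule T0_integrand_discounted_claim)
  next
    case 3
    from x l 3 reg(5) show ?thesis
      unfolding \<omega>_eq by (rule T0_integrand_discounted_jump)
  qed
qed

lemma T0_discounted_eq_integral:
  assumes v: "\<And>x. x \<in> grid p delta \<Longrightarrow> (\<lambda>l. v x l) \<in> borel_measurable (restrict_space borel {lam0..})"
    and x: "x \<in> grid p delta" and l: "lam0 \<le> l"
  shows "ennreal (exp (- q * t)) * T0 p q d beta lam0 FU FY delta v x l
    = (\<integral>\<^sup>+ \<omega>. E0_integrand (\<lambda>x' l' t'. ennreal (exp (- q * t')) * v x' l') x l t \<omega> \<partial>Om l)"
proof -
  have "T0_integrand (grid_extension v) x l \<in> borel_measurable (Om l)"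
    using T0_terms_measurable_Om[OF grid_extension_measurable[OF v]] by measurable
  then have "ennreal (exp (- q * t)) * T0 p q d beta lam0 FU FY delta v x l
      = (\<integral>\<^sup>+ \<omega>. ennreal (exp (- q * t)) * T0_integrand (grid_extension v) x l \<omega> \<partial>Om l)"
    using T0_eq_integral_grid[OF v x l] by (simp add: nn_integral_cmult)
  also have "\<dots> = (\<integral>\<^sup>+ \<omega>. E0_integrand (\<lambda>x' l' t'. ennreal (exp (- q * t')) * v x' l') x l t \<omega> \<partial>Om l)"
    by (rule nn_integral_cong_AE, rule AE_mp[OF AE_regular_outcome[OF l]], rule AE_I2)
      (intro impI T0_integrand_discounted[OF x l])
  finally show ?thesis .
qed

lemma Jn_E1:
  assumes "\<pi> ((x, l, t) # h) = E1"
  shows "Jn p q d beta lam0 FU FY delta \<pi> (Suc n) ((x, l, t) # h)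
    = ennreal (exp (- q * t)) * ennreal (delta * p)
      + Jn p q d beta lam0 FU FY delta \<pi> n ((x - p * delta, l, t) # (x, l, t) # h)"
proof -
  have "ennreal (exp (- q * t) * (p * delta)) = ennreal (exp (- q * t)) * ennreal (delta * p)"
    unfolding ennreal_exp_mult by (simp add: mult.commute)
  moreover have "Jn p q d beta lam0 FU FY delta \<pi> (Suc n) ((x, l, t) # h)
      = ennreal (exp (- q * t) * (p * delta))
        + Jn p q d beta lam0 FU FY delta \<pi> n ((x - p * delta, l, t) # (x, l, t) # h)"
    using assms by simp
  ultimately show ?thesis
    by simp
qed

lemma Jn_EF:
  "\<pi> ((x, l, t) # h) = EF \<Longrightarrow>
    Jn p q d beta lam0 FU FY delta \<pi> (Suc n) ((x, l, t) # h) = ennreal (exp (- q * t)) * TF x l"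
  by (simp add: TF_def ennreal_exp_mult)

lemma discounted_T1:
  "ennreal (exp (- q * t)) * T1 p delta w x l
    = ennreal (exp (- q * t)) * ennreal (delta * p) + ennreal (exp (- q * t)) * w (x - p * delta) l"
  unfolding T1_def by (simp add: distrib_left add.commute)

lemma Jn_le_supersolution_chain:
  assumes M: "\<And>n x. x \<in> grid p delta \<Longrightarrow> (\<lambda>l. w n x l) \<in> borel_measurable (restrict_space borel {lam0..})"
    and S: "\<And>n x l. x \<in> grid p delta \<Longrightarrow> lam0 \<le> l \<Longrightarrow> Top p q d beta lam0 FU FY delta (w n) x l \<le> w (Suc n) x l"
    and adm: "admissible p delta \<pi>"
  shows "x \<in> grid p delta \<Longrightarrow> lam0 \<le> l \<Longrightarrow>
    Jn p q d beta lam0 FU FY delta \<pi> n ((x, l, t) # h) \<le> ennreal (exp (- q * t)) * w n x l"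
proof (induction n arbitrary: x l t h)
  case 0
  then show ?case by simp
next
  case (Suc n)
  let ?e = "ennreal (exp (- q * t))"
  have Top: "Top p q d beta lam0 FU FY delta (w n) x l \<le> w (Suc n) x l"
    using S Suc.prems by blast
  show ?case
  proof (cases "\<pi> ((x, l, t) # h)")
    case E0
    have "Jn p q d beta lam0 FU FY delta \<pi> (Suc n) ((x, l, t) # h)
        = (\<integral>\<^sup>+ \<omega>. E0_integrand (\<lambda>x' l' t'. Jn p q d beta lam0 FU FY delta \<pi> n ((x', l', t') # (x, l, t) # h)) x l t \<omega> \<partial>Om l)"
      using E0 by (rule Jn_E0)
    also have "\<dots> \<le> (\<integral>\<^sup>+ \<omega>. E0_integrand (\<lambda>x' l' t'. ennreal (exp (- q * t')) * w n x' l') x l t \<omega> \<partial>Om l)"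
      using AE_regular_outcome[OF Suc.prems(2)]
      by (intro nn_integral_mono_AE, elim AE_mp, intro AE_I2 impI E0_integrand_mono Suc.IH)
         (use Suc.prems in \<open>auto simp: regular_outcome_def split: prod.splits\<close>)
    also have "\<dots> = ?e * T0 p q d beta lam0 FU FY delta (w n) x l"
      using M Suc.prems by (intro T0_discounted_eq_integral[symmetric])
    also have "\<dots> \<le> ?e * w (Suc n) x l"
      using T0_le_Top Top by (intro mult_left_mono) (auto intro: order_trans)
    finally show ?thesis .
  next
    case E1
    then have px: "p * delta \<le> x"
      using adm unfolding admissible_def by blast
    have "Jn p q d beta lam0 FU FY delta \<pi> (Suc n) ((x, l, t) # h)
        = ?e * ennreal (delta * p) + Jn p q d beta lam0 FU FY delta \<pi> n ((x - p * delta, l, t) # (x, l, t) # h)"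
      using E1 by (rule Jn_E1)
    also have "\<dots> \<le> ?e * ennreal (delta * p) + ?e * w n (x - p * delta) l"
      using Suc.prems grid_diff[OF Suc.prems(1) px] by (intro add_left_mono Suc.IH)
    also have "\<dots> = ?e * T1 p delta (w n) x l"
      by (rule discounted_T1[symmetric])
    also have "\<dots> \<le> ?e * w (Suc n) x l"
      using T1_le_Top[OF px] Top by (intro mult_left_mono) (auto intro: order_trans)
    finally show ?thesis .
  next
    case EF
    then have "Jn p q d beta lam0 FU FY delta \<pi> (Suc n) ((x, l, t) # h) = ?e * TF x l"
      by (rule Jn_EF)
    also have "\<dots> \<le> ?e * w (Suc n) x l"
      using TF_le_Top Top by (intro mult_left_mono) (auto intro: order_trans)
    finally show ?thesis .
  qed
qed

definition value_iter :: "nat \<Rightarrow> real \<Rightarrow> real \<Rightarrow> ennreal" where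
  "value_iter n = (Top p q d beta lam0 FU FY delta ^^ n) (\<lambda>x l. 0)"

lemma value_iter_0: "value_iter 0 = (\<lambda>x l. 0)"
  by (simp add: value_iter_def)

lemma value_iter_Suc: "value_iter (Suc n) = Top p q d beta lam0 FU FY delta (value_iter n)"
  by (simp add: value_iter_def)

lemma value_iter_measurable:
  "x \<in> grid p delta \<Longrightarrow> (\<lambda>l. value_iter n x l) \<in> borel_measurable (restrict_space borel {lam0..})"
proof (induction n arbitrary: x)
  case 0
  then show ?case by (simp add: value_iter_0)
next
  case (Suc n)
  have "(\<lambda>l. T0 p q d beta lam0 FU FY delta (grid_extension (value_iter n)) x (max lam0 l)) \<in> borel_measurable borel"
    using Suc.IH by (intro T0_measurable grid_extension_measurable)
  then have T0: "(\<lambda>l. T0 p q d beta lam0 FU FY delta (value_iter n) x (max lam0 l)) \<in> borel_measurable borel"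
    using Suc.prems by (simp add: T0_grid_extension)
  have T1: "(\<lambda>l. T1 p delta (value_iter n) x (max lam0 l)) \<in> borel_measurable borel" if "p * delta \<le> x"
    using Suc.IH[OF grid_diff[OF Suc.prems that]] unfolding measurable_restrict_atLeast_iff T1_def
    by measurable
  have "(\<lambda>l. Top p q d beta lam0 FU FY delta (value_iter n) x (max lam0 l)) \<in> borel_measurable borel"
    using T0 T1 unfolding Top_def TF_def by (cases "p * delta \<le> x") simp_all
  then show ?case
    unfolding measurable_restrict_atLeast_iff value_iter_Suc .
qed

lemma value_iter_mono: "value_iter n x l \<le> value_iter (Suc n) x l"
proof (induction n arbitrary: x l)
  case 0
  then show ?case by (simp add: value_iter_0)
next
  case (Suc n)
  then show ?case
    unfolding value_iter_Suc[of "Suc n"] value_iter_Suc[of n] by (intro Top_mono)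
qed

definition greedy_action :: "(real \<Rightarrow> real \<Rightarrow> ennreal) \<Rightarrow> real \<Rightarrow> real \<Rightarrow> act" where
  "greedy_action w x l =
    (if p * delta \<le> x \<and> T0 p q d beta lam0 FU FY delta w x l \<le> T1 p delta w x l \<and> TF x l \<le> T1 p delta w x l then E1
     else if T0 p q d beta lam0 FU FY delta w x l \<le> TF x l then EF else E0)"

lemma greedy_action_E0:
  "greedy_action w x l = E0 \<Longrightarrow> Top p q d beta lam0 FU FY delta w x l = T0 p q d beta lam0 FU FY delta w x l"
  unfolding greedy_action_def Top_def by (auto split: if_splits simp: max_def not_le)

lemma greedy_action_E1:
  "greedy_action w x l = E1 \<Longrightarrow> p * delta \<le> x \<and> Top p q d beta lam0 FU FY delta w x l = T1 p delta w x l"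
  unfolding greedy_action_def Top_def by (auto split: if_splits simp: max_def)

lemma greedy_action_EF:
  "greedy_action w x l = EF \<Longrightarrow> Top p q d beta lam0 FU FY delta w x l = TF x l"
  unfolding greedy_action_def Top_def by (auto split: if_splits simp: max_def not_le)

text \<open>The length of the history counts the steps already taken, so with \<open>m\<close> of the \<open>N\<close>
  steps left the action is greedy with respect to \<open>value_iter (m - 1)\<close>.\<close>
definition greedy_policy :: "nat \<Rightarrow> policy" where
  "greedy_policy N h = (case h of
      (x, l, t) # h' \<Rightarrow> if length h' < N then greedy_action (value_iter (N - Suc (length h'))) x l else E0
    | [] \<Rightarrow> E0)"

lemma greedy_policy_admissible: "admissible p delta (greedy_policy N)"
  unfolding admissible_def greedy_policy_def by (auto split: if_splits dest: greedy_action_E1)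

lemma value_iter_le_Jn_greedy_policy:
  "length h + m = N \<Longrightarrow> x \<in> grid p delta \<Longrightarrow> lam0 \<le> l \<Longrightarrow>
    ennreal (exp (- q * t)) * value_iter m x l \<le> Jn p q d beta lam0 FU FY delta (greedy_policy N) m ((x, l, t) # h)"
proof (induction m arbitrary: h x l t)
  case 0
  then show ?case by (simp add: value_iter_0)
next
  case (Suc k)
  let ?e = "ennreal (exp (- q * t))"
  let ?\<pi> = "greedy_policy N"
  have "length h < N" "N - Suc (length h) = k"
    using Suc.prems(1) by auto
  then have policy: "?\<pi> ((x, l, t) # h) = greedy_action (value_iter k) x l"
    by (simp add: greedy_policy_def)
  show ?case
  proof (cases "greedy_action (value_iter k) x l")
    case E0
    have "?e * value_iter (Suc k) x l = ?e * T0 p q d beta lam0 FU FY delta (value_iter k) x l"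
      using greedy_action_E0[OF E0] by (simp add: value_iter_Suc)
    also have "\<dots> = (\<integral>\<^sup>+ \<omega>. E0_integrand (\<lambda>x' l' t'. ennreal (exp (- q * t')) * value_iter k x' l') x l t \<omega> \<partial>Om l)"
      using value_iter_measurable Suc.prems(2,3) by (rule T0_discounted_eq_integral)
    also have "\<dots> \<le> (\<integral>\<^sup>+ \<omega>. E0_integrand (\<lambda>x' l' t'. Jn p q d beta lam0 FU FY delta ?\<pi> k ((x', l', t') # (x, l, t) # h)) x l t \<omega> \<partial>Om l)"
      using AE_regular_outcome[OF Suc.prems(3)]
      by (intro nn_integral_mono_AE, elim AE_mp, intro AE_I2 impI E0_integrand_mono Suc.IH)
         (use Suc.prems in \<open>auto simp: regular_outcome_def split: prod.splits\<close>)
    also have "\<dots> = Jn p q d beta lam0 FU FY delta ?\<pi> (Suc k) ((x, l, t) # h)"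
      by (rule Jn_E0[symmetric]) (simp add: policy E0)
    finally show ?thesis .
  next
    case E1
    then have px: "p * delta \<le> x"
      by (simp add: greedy_action_E1)
    have "?e * value_iter (Suc k) x l = ?e * T1 p delta (value_iter k) x l"
      using greedy_action_E1[OF E1] by (simp add: value_iter_Suc)
    also have "\<dots> = ?e * ennreal (delta * p) + ?e * value_iter k (x - p * delta) l"
      by (rule discounted_T1)
    also have "\<dots> \<le> ?e * ennreal (delta * p) + Jn p q d beta lam0 FU FY delta ?\<pi> k ((x - p * delta, l, t) # (x, l, t) # h)"
      using Suc.prems grid_diff[OF Suc.prems(2) px] by (intro add_left_mono Suc.IH) auto
    also have "\<dots> = Jn p q d beta lam0 FU FY delta ?\<pi> (Suc k) ((x, l, t) # h)"
      by (rule Jn_E1[symmetric]) (simp add: policy E1)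
    finally show ?thesis .
  next
    case EF
    then have "?e * value_iter (Suc k) x l = ?e * TF x l"
      by (simp add: greedy_action_EF value_iter_Suc)
    also have "\<dots> = Jn p q d beta lam0 FU FY delta ?\<pi> (Suc k) ((x, l, t) # h)"
      by (rule Jn_EF[symmetric]) (simp add: policy EF)
    finally show ?thesis
      by simp
  qed
qed

lemma Vdelta_eq_SUP_value_iter:
  assumes x: "x \<in> grid p delta" and l: "lam0 \<le> l"
  shows "Vdelta p q d beta lam0 FU FY delta x l = (SUP n. value_iter n x l)"
proof (rule antisym)
  have "Jn p q d beta lam0 FU FY delta \<pi> n [(x, l, 0)] \<le> value_iter n x l" if "admissible p delta \<pi>" for \<pi> n
    using Jn_le_supersolution_chain[where w=value_iter and t=0 and h="[]", OF value_iter_measurable _ that x l]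
    by (simp add: value_iter_Suc)
  then show "Vdelta p q d beta lam0 FU FY delta x l \<le> (SUP n. value_iter n x l)"
    unfolding Vdelta_def J_def by (intro SUP_least) (auto intro: SUP_upper2)
  have "value_iter n x l \<le> J p q d beta lam0 FU FY delta (greedy_policy n) x l" for n
  proof -
    have "value_iter n x l \<le> Jn p q d beta lam0 FU FY delta (greedy_policy n) n [(x, l, 0)]"
      using value_iter_le_Jn_greedy_policy[of "[]" n n x l 0] x l by simp
    also have "\<dots> \<le> J p q d beta lam0 FU FY delta (greedy_policy n) x l"
      unfolding J_def by (rule SUP_upper) simp
    finally show ?thesis .
  qed
  then show "(SUP n. value_iter n x l) \<le> Vdelta p q d beta lam0 FU FY delta x l"
    unfolding Vdelta_def using greedy_policy_admissible by (intro SUP_least) (blast intro: SUP_upper2)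
qed

section \<open>The discretised value function\<close>

lemma Vdelta_measurable:
  assumes "x \<in> grid p delta"
  shows "(\<lambda>l. Vdelta p q d beta lam0 FU FY delta x l) \<in> borel_measurable (restrict_space borel {lam0..})"
proof -
  have "(\<lambda>l. SUP n. value_iter n x l) \<in> borel_measurable (restrict_space borel {lam0..})"
    using value_iter_measurable[OF assms] by measurable
  then show ?thesis
    by (rule measurable_cong[THEN iffD1, rotated]) (auto simp: space_restrict_space Vdelta_eq_SUP_value_iter[OF assms])
qed

lemma Vdelta_supersolution:
  assumes x: "x \<in> grid p delta" and l: "lam0 \<le> l"
  shows "Top p q d beta lam0 FU FY delta (Vdelta p q d beta lam0 FU FY delta) x l \<le> Vdelta p q d beta lam0 FU FY delta x l"
proof -
  let ?V = "Vdelta p q d beta lam0 FU FY delta"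
  have V: "?V x l = (SUP n. value_iter n x l)"
    using x l by (rule Vdelta_eq_SUP_value_iter)
  have iterate_le: "(SUP n. value_iter (Suc n) x l) \<le> ?V x l"
    unfolding V by (intro SUP_least SUP_upper) auto
  have "grid_extension ?V = (\<lambda>x l. SUP n. grid_extension (value_iter n) x l)"
  proof (intro ext)
    fix y l'
    show "grid_extension ?V y l' = (SUP n. grid_extension (value_iter n) y l')"
      by (cases "y \<in> grid p delta") (simp_all add: grid_extension_def Vdelta_eq_SUP_value_iter)
  qed
  then have "T0 p q d beta lam0 FU FY delta ?V x l
      = T0 p q d beta lam0 FU FY delta (\<lambda>x l. SUP n. grid_extension (value_iter n) x l) x l"
    using T0_grid_extension[OF x l, of ?V] by simp
  also have "\<dots> = (SUP n. T0 p q d beta lam0 FU FY delta (grid_extension (value_iter n)) x l)"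
    using value_iter_measurable by (intro T0_SUP grid_extension_measurable)
      (auto simp: grid_extension_def value_iter_mono)
  also have "\<dots> \<le> (SUP n. value_iter (Suc n) x l)"
    by (intro SUP_mono) (auto simp: T0_grid_extension[OF x l] value_iter_Suc intro: T0_le_Top)
  finally have T0: "T0 p q d beta lam0 FU FY delta ?V x l \<le> ?V x l"
    using iterate_le by (rule order_trans)
  have TF: "TF x l \<le> ?V x l"
    using TF_le_Top[of x l "value_iter 0"] iterate_le SUP_upper[of 0 UNIV "\<lambda>n. value_iter (Suc n) x l"]
    by (simp add: value_iter_Suc)
  have T1: "T1 p delta ?V x l \<le> ?V x l" if px: "p * delta \<le> x"
  proof -
    have "T1 p delta ?V x l = (SUP n. T1 p delta (value_iter n) x l)"
      unfolding T1_def Vdelta_eq_SUP_value_iter[OF grid_diff[OF x px] l] by (rule ennreal_SUP_add_const)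
    also have "\<dots> \<le> (SUP n. value_iter (Suc n) x l)"
      by (intro SUP_mono) (auto simp: value_iter_Suc intro: T1_le_Top[OF px])
    finally show ?thesis
      using iterate_le by (rule order_trans)
  qed
  show ?thesis
    unfolding Top_def using T0 T1 TF by auto
qed

text \<open>No growth condition on \<open>W\<close> is needed: \<open>Vdelta\<close> is the supremum over finite horizons,
  and the horizon-\<open>n\<close> payments start from the value \<open>0 \<le> W\<close>.\<close>
lemma Vdelta_le_supersolution:
  assumes W: "\<And>x. x \<in> grid p delta \<Longrightarrow> (\<lambda>l. W x l) \<in> borel_measurable (restrict_space borel {lam0..})"
    and super: "\<And>x l. x \<in> grid p delta \<Longrightarrow> lam0 \<le> l \<Longrightarrow> Top p q d beta lam0 FU FY delta W x l \<le> W x l"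
    and x: "x \<in> grid p delta" and l: "lam0 \<le> l"
  shows "Vdelta p q d beta lam0 FU FY delta x l \<le> W x l"
proof -
  have "Jn p q d beta lam0 FU FY delta \<pi> n [(x, l, 0)] \<le> W x l" if "admissible p delta \<pi>" for \<pi> n
    using Jn_le_supersolution_chain[where w="\<lambda>n. W" and t=0 and h="[]", OF W super that x l] by simp
  then show ?thesis
    unfolding Vdelta_def J_def by (auto intro!: SUP_least)
qed

lemma discounted_linear_le:
  assumes a: "0 \<le> a" and x: "0 \<le> x"
  shows "exp (- q * a) * (x + p * a + p / q) \<le> x + p / q"
proof -
  have "p * a + p / q = p / q * (1 + q * a)"
    using q_pos by (simp add: field_simps)
  also have "\<dots> \<le> p / q * exp (q * a)"
    using p_pos q_pos by (intro mult_left_mono exp_ge_add_one_self) simp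
  finally have "exp (- q * a) * (p * a + p / q) \<le> exp (- q * a) * (p / q * exp (q * a))"
    by (intro mult_left_mono) simp_all
  also have "\<dots> = p / q"
    by (simp add: exp_minus field_simps)
  finally have "exp (- q * a) * (p * a + p / q) \<le> p / q" .
  moreover have "exp (- q * a) * x \<le> x"
    using q_pos a x by (simp add: mult_left_le_one_le)
  ultimately show ?thesis
    by (simp add: distrib_left add.assoc)
qed

lemma discounted_payment_le_linear:
  assumes "0 \<le> a" "0 \<le> b" "b \<le> z" "z \<le> x + p * a" "0 \<le> x"
  shows "ennreal (exp (- q * a) * b) + ennreal (exp (- q * a)) * ennreal (z - b + p / q) \<le> ennreal (x + p / q)"
proof -
  have "0 \<le> p / q"
    using p_pos q_pos by simp
  then have "ennreal (exp (- q * a) * b) + ennreal (exp (- q * a)) * ennreal (z - b + p / q)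
      = ennreal (exp (- q * a) * b + exp (- q * a) * (z - b + p / q))"
    unfolding ennreal_exp_mult[symmetric] using assms by (intro ennreal_plus[symmetric]) auto
  also have "\<dots> = ennreal (exp (- q * a) * (z + p / q))"
    by (rule arg_cong[where f=ennreal]) (simp add: algebra_simps)
  also have "\<dots> \<le> ennreal (exp (- q * a) * (x + p * a + p / q))"
    using assms by (intro ennreal_leI mult_left_mono) auto
  also have "\<dots> \<le> ennreal (x + p / q)"
    using assms by (intro ennreal_leI discounted_linear_le)
  finally show ?thesis .
qed

lemma E0_integrand_linear_le:
  assumes x: "0 \<le> x" and \<omega>: "regular_outcome \<omega>"
  shows "E0_integrand (\<lambda>x' l' t'. ennreal (exp (- q * t')) * ennreal (x' + p / q)) x l 0 \<omega> \<le> ennreal (x + p / q)"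
proof -
  obtain \<tau> U T Y where \<omega>_eq: "\<omega> = ((\<tau>, U), (T, Y))"
    by (metis prod.collapse)
  have reg: "0 \<le> \<tau>" "0 < U" "0 \<le> T"
    using \<omega> by (auto simp: regular_outcome_def \<omega>_eq)
  let ?E = "E0_integrand (\<lambda>x' l' t'. ennreal (exp (- q * t')) * ennreal (x' + p / q)) x l 0 \<omega>"
  consider (no_event) "ereal delta < \<tau>" "delta < T"
    | (claim) "\<not> (ereal delta < \<tau> \<and> delta < T)" "\<tau> \<le> ereal delta" "\<tau> \<le> ereal T"
    | (jump) "\<not> (\<tau> \<le> ereal delta \<and> \<tau> \<le> ereal T)" "ereal T < \<tau>" "T < delta"
    | (none) "?E = 0"
    unfolding E0_integrand_def \<omega>_eq by fastforce
  then show ?thesis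
  proof cases
    case no_event
    then have "?E = ennreal (exp (- q * delta) * 0) + ennreal (exp (- q * delta)) * ennreal (x + p * delta - 0 + p / q)"
      by (simp add: E0_integrand_def \<omega>_eq)
    also have "\<dots> \<le> ennreal (x + p / q)"
      using p_pos delta_pos x by (intro discounted_payment_le_linear) auto
    finally show ?thesis .
  next
    case claim
    obtain s where s: "\<tau> = ereal s" "0 \<le> s"
      using reg(1) claim(2) by (cases \<tau>) auto
    define y where "y = x + p * s - U"
    show ?thesis
    proof (cases "y < 0")
      case True
      then have "x + p * s < U"
        by (simp add: y_def)
      then show ?thesis
        using claim by (simp add: E0_integrand_def \<omega>_eq s)
    next
      case False
      then have "U \<le> x + p * s"
        by (simp add: y_def)
      with claim have "?E = ennreal (exp (- q * s) * (y - rho p delta y))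
          + ennreal (exp (- q * s)) * ennreal (y - (y - rho p delta y) + p / q)"
        by (simp add: E0_integrand_def \<omega>_eq s y_def[symmetric] Let_def)
      also have "\<dots> \<le> ennreal (x + p / q)"
        using False reg(2) s x rho_le[of y] rho_nonneg[of y]
        by (intro discounted_payment_le_linear) (auto simp: y_def)
      finally show ?thesis .
    qed
  next
    case jump
    then have "\<not> \<tau> \<le> ereal T" "\<not> ereal delta < \<tau> \<or> \<not> delta < T"
      by auto
    with jump have "?E = ennreal (exp (- q * T) * (p * T)) + ennreal (exp (- q * T)) * ennreal (x + p * T - p * T + p / q)"
      by (simp add: E0_integrand_def \<omega>_eq not_less)
    also have "\<dots> \<le> ennreal (x + p / q)"
      using p_pos reg(3) x by (intro discounted_payment_le_linear) auto
    finally show ?thesis .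
  qed simp
qed

lemma linear_supersolution:
  assumes x: "x \<in> grid p delta" and l: "lam0 \<le> l"
  shows "Top p q d beta lam0 FU FY delta (\<lambda>x l. ennreal (x + p / q)) x l \<le> ennreal (x + p / q)"
proof -
  let ?W = "\<lambda>x l. ennreal (x + p / q)"
  interpret prob_space "Om l"
    using l by (rule prob_space_Om)
  have "T0 p q d beta lam0 FU FY delta ?W x l
      = (\<integral>\<^sup>+ \<omega>. E0_integrand (\<lambda>x' l' t'. ennreal (exp (- q * t')) * ?W x' l') x l 0 \<omega> \<partial>Om l)"
    using T0_discounted_eq_integral[of ?W x l 0] x l by simp
  also have "\<dots> \<le> (\<integral>\<^sup>+ \<omega>. ennreal (x + p / q) \<partial>Om l)"
    using AE_regular_outcome[OF l]
    by (intro nn_integral_mono_AE, elim AE_mp, intro AE_I2 impI E0_integrand_linear_le grid_nonneg x)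
  also have "\<dots> = ennreal (x + p / q)"
    by (simp add: emeasure_space_1)
  finally have T0: "T0 p q d beta lam0 FU FY delta ?W x l \<le> ?W x l" .
  have "T1 p delta ?W x l = ?W x l" if "p * delta \<le> x"
  proof -
    have "0 < p / q" "0 < delta * p"
      using p_pos q_pos delta_pos by simp_all
    then have "T1 p delta ?W x l = ennreal (x - p * delta + p / q + delta * p)"
      unfolding T1_def using that by (intro ennreal_plus[symmetric]) simp_all
    then show ?thesis
      by simp
  qed
  moreover have "TF x l \<le> ?W x l"
    unfolding TF_def using p_pos q_pos by (intro ennreal_leI) simp
  ultimately show ?thesis
    using T0 unfolding Top_def by auto
qed

lemma Vdelta_le_linear:
  assumes "x \<in> grid p delta" "lam0 \<le> l"
  shows "Vdelta p q d beta lam0 FU FY delta x l \<le> ennreal (x + p / q)"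
  using assms by (intro Vdelta_le_supersolution[where W="\<lambda>x l. ennreal (x + p / q)"] linear_supersolution) simp_all

end

theorem corollary6p7:
  fixes p q d beta lam0 eta delta :: real and FU FY :: "real measure"
  assumes "p > 0" "q > 0" "d > 0" "beta > 0" "lam0 \<ge> 0" "delta > 0"
    and "prob_space FU" "sets FU = sets borel" "AE u in FU. u > 0" "integrable FU (\<lambda>u. u)"
    and "prob_space FY" "sets FY = sets borel" "AE y in FY. y > 0" "integrable FY (\<lambda>y. y)"
    and "eta > 0" "p = (1 + eta) * (\<integral>u. u \<partial>FU) * lambda_av lam0 d beta FY"
  shows
    "(\<forall>x \<in> grid p delta. (\<lambda>l. Vdelta p q d beta lam0 FU FY delta x l)
          \<in> borel_measurable (restrict_space borel {lam0..}))
   \<and> (\<forall>x \<in> grid p delta. \<forall>l \<ge> lam0.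
          Top p q d beta lam0 FU FY delta (Vdelta p q d beta lam0 FU FY delta) x l
            \<le> Vdelta p q d beta lam0 FU FY delta x l)
   \<and> (\<exists>K > 0. \<forall>x \<in> grid p delta. \<forall>l \<ge> lam0.
          Vdelta p q d beta lam0 FU FY delta x l \<le> ennreal (K + x))
   \<and> (\<forall>W :: real \<Rightarrow> real \<Rightarrow> real.
        (\<forall>x \<in> grid p delta. (\<lambda>l. W x l) \<in> borel_measurable (restrict_space borel {lam0..}))
        \<longrightarrow> (\<forall>x \<in> grid p delta. \<forall>l \<ge> lam0. 0 \<le> W x l)
        \<longrightarrow> (\<forall>x \<in> grid p delta. \<forall>l \<ge> lam0.
              Top p q d beta lam0 FU FY delta (\<lambda>x l. ennreal (W x l)) x l \<le> ennreal (W x l))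
        \<longrightarrow> (\<exists>K > 0. \<forall>x \<in> grid p delta. \<forall>l \<ge> lam0. W x l \<le> K + x)
        \<longrightarrow> (\<forall>x \<in> grid p delta. \<forall>l \<ge> lam0.
              Vdelta p q d beta lam0 FU FY delta x l \<le> ennreal (W x l)))"
proof -
  interpret discrete_dividend_problem p q d beta lam0 delta FU FY
    using assms(1-9,11-13) by (rule discrete_dividend_problem.intro)
  show ?thesis
  proof (intro conjI ballI allI impI)
    fix x assume "x \<in> grid p delta"
    then show "(\<lambda>l. Vdelta p q d beta lam0 FU FY delta x l) \<in> borel_measurable (restrict_space borel {lam0..})"
      by (rule Vdelta_measurable)
  next
    fix x l assume "x \<in> grid p delta" "lam0 \<le> l"
    then show "Top p q d beta lam0 FU FY delta (Vdelta p q d beta lam0 FU FY delta) x l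
        \<le> Vdelta p q d beta lam0 FU FY delta x l"
      by (rule Vdelta_supersolution)
  next
    show "\<exists>K>0. \<forall>x\<in>grid p delta. \<forall>l\<ge>lam0. Vdelta p q d beta lam0 FU FY delta x l \<le> ennreal (K + x)"
      using Vdelta_le_linear assms(1,2) by (intro exI[of _ "p / q"]) (simp add: add.commute)
  next
    fix W :: "real \<Rightarrow> real \<Rightarrow> real" and x l
    assume "\<forall>x\<in>grid p delta. (\<lambda>l. W x l) \<in> borel_measurable (restrict_space borel {lam0..})"
      and "\<forall>x\<in>grid p delta. \<forall>l\<ge>lam0.
        Top p q d beta lam0 FU FY delta (\<lambda>x l. ennreal (W x l)) x l \<le> ennreal (W x l)"
      and "x \<in> grid p delta" "lam0 \<le> l"
    then show "Vdelta p q d beta lam0 FU FY delta x l \<le> ennreal (W x l)"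
      by (intro Vdelta_le_supersolution[where W="\<lambda>x l. ennreal (W x l)"]) auto
  qed
qed

end
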